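(* Let assumption ( ** ) hold, and suppose that $w(t,x)$ is a polynomially bounded LT-solution of the Cauchy problem $(\mathbb D_{(k)} w)(t,x)=\Delta w(t,x)$, $t>0$, $x\in\mathbb R^n$; $w(0,x)=w_0(x)$, with $w_0(x)\equiv 0$. Then $w(t,x)\equiv 0$.
   Context: Let $k$ be a function on $(0,\infty)$ and define the operator $(\mathbb D_{(k)}u)(t)=\frac{d}{dt}\int_0^t k(t-\tau)u(\tau)\,d\tau - k(t)u(0)$, with Laplace transform $\mathcal K(p)=\int_0^\infty e^{-pt}k(t)\,dt$. Assumption ( ** ): the function $k$ is nonnegative, locally integrable, nonzero on a set of positive measure, and its Laplace transform $\mathcal K(p)$ exists for all $p>0$. A function $w(t,x)$ is a polynomially bounded LT-solution of the Cauchy problem if $|w(t,x)|\le P(|x|)$ for some polynomial $P$ independent of $t$, $w$ is continuous in $t$ on $[0,\infty)$ uniformly with respect to $x\in\mathbb R^n$, $w(0,x)=w_0(x)$, and its Laplace transform in $t$, $\tilde w(p,x)$, is twice continuously differentiable in $x$ for each $p>0$ and satisfies $p\mathcal K(p)\tilde w(p,x)-\mathcal K(p)w_0(x)=\Delta \tilde w(p,x)$, $p>0$, $x\in\mathbb R^n$. *)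

theory Defs
  imports "HOL-Analysis.Analysis" "HOL-Computational_Algebra.Polynomial"
begin

definition laplace :: "(real \<Rightarrow> real) \<Rightarrow> real \<Rightarrow> real" where
  "laplace f p = (LINT t:{0<..}|lborel. exp (- p * t) * f t)"

definition assumption_kernel :: "(real \<Rightarrow> real) \<Rightarrow> bool" where
  "assumption_kernel k \<longleftrightarrow>
     (\<forall>t>0. k t \<ge> 0) \<and>
     (\<forall>a b. 0 < a \<longrightarrow> set_integrable lborel {a..b} k) \<and>
     emeasure lborel {t\<in>{0<..}. k t \<noteq> 0} > 0 \<and>
     (\<forall>p>0. set_integrable lborel {0<..} (\<lambda>t. exp (- p * t) * k t))"

definition has_partial :: "'n \<Rightarrow> (real^'n \<Rightarrow> real) \<Rightarrow> real^'n \<Rightarrow> bool" where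
  "has_partial i f x \<longleftrightarrow> (\<lambda>s. f (x + s *\<^sub>R axis i 1)) differentiable (at 0)"

definition partial :: "'n \<Rightarrow> (real^'n \<Rightarrow> real) \<Rightarrow> real^'n \<Rightarrow> real" where
  "partial i f x = deriv (\<lambda>s. f (x + s *\<^sub>R axis i 1)) 0"

definition C2 :: "(real^'n \<Rightarrow> real) \<Rightarrow> bool" where
  "C2 f \<longleftrightarrow> continuous_on UNIV f \<and>
     (\<forall>i. (\<forall>x. has_partial i f x) \<and> continuous_on UNIV (partial i f)) \<and>
     (\<forall>i j. (\<forall>x. has_partial j (partial i f) x) \<and> continuous_on UNIV (partial j (partial i f)))"

definition laplacian :: "(real^'n \<Rightarrow> real) \<Rightarrow> real^'n \<Rightarrow> real" where
  "laplacian f x = (\<Sum>i\<in>UNIV. partial i (partial i f) x)"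

definition poly_bounded_LT_solution ::
  "(real \<Rightarrow> real) \<Rightarrow> (real^'n \<Rightarrow> real) \<Rightarrow> (real \<Rightarrow> real^'n \<Rightarrow> real) \<Rightarrow> bool" where
  "poly_bounded_LT_solution k w0 w \<longleftrightarrow>
     (\<exists>P :: real poly. \<forall>t\<ge>0. \<forall>x. \<bar>w t x\<bar> \<le> poly P (norm x)) \<and>
     (\<forall>t0\<ge>0. \<forall>e>0. \<exists>d>0. \<forall>t\<ge>0. \<bar>t - t0\<bar> < d \<longrightarrow> (\<forall>x. \<bar>w t x - w t0 x\<bar> < e)) \<and>
     (\<forall>x. w 0 x = w0 x) \<and>
     (\<forall>p>0. C2 (\<lambda>x. laplace (\<lambda>t. w t x) p) \<and>
        (\<forall>x. p * laplace k p * laplace (\<lambda>t. w t x) p - laplace k p * w0 x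
             = laplacian (\<lambda>y. laplace (\<lambda>t. w t y) p) x))"

end

theory Submission imports Defs "HOL-Real_Asymp.Real_Asymp" begin

text \<open>For \<open>p > 0\<close> the Laplace transform \<open>U x = laplace (\<lambda>t. w t x) p\<close> solves \<open>\<Delta>U = c U\<close> with
  \<open>c = p K(p) > 0\<close>, positivity coming from \<open>k \<ge> 0\<close>, \<open>k \<noteq> 0\<close> on a set of positive measure.
  A polynomially bounded solution of this equation vanishes: the barrier
  \<open>\<phi>(x) = \<Sum>\<^sub>j cosh (\<surd>c x\<^sub>j)\<close> also solves it and grows exponentially, so \<open>\<plusminus>U - \<epsilon>\<phi>\<close>
  is negative far out and, by the maximum principle, everywhere. Thus all Laplace
  transforms of the bounded continuous function \<open>t \<mapsto> w(t, x)\<close> vanish, and it is zero by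
  Lerch's theorem, proved by Weierstrass approximation after substituting \<open>y = e\<^sup>-\<^sup>t\<close>.\<close>

lemma second_deriv_nonpos_at_max:
  fixes G G' :: "real \<Rightarrow> real"
  assumes d1: "\<And>s. (G has_real_derivative G' s) (at s)"
    and d2: "(G' has_real_derivative D) (at 0)"
    and mx: "\<And>s. G s \<le> G 0"
  shows "D \<le> 0"
proof (rule ccontr)
  assume "\<not> D \<le> 0" hence D: "D > 0" by simp
  have g0: "G' 0 = 0"
    using DERIV_local_max[OF d1[of 0], of 1] mx by auto
  have "((\<lambda>y. (G' y - G' 0) / (y - 0)) \<longlongrightarrow> D) (at 0)"
    using d2 by (simp add: has_field_derivative_iff)
  hence "((\<lambda>y. G' y / y) \<longlongrightarrow> D) (at_right 0)"
    using g0 by (auto intro: tendsto_mono at_le)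
  hence "eventually (\<lambda>y. G' y / y > 0) (at_right 0)"
    using D by (rule order_tendstoD(1))
  then obtain b where b: "b > 0" "\<And>y. y > 0 \<Longrightarrow> y < b \<Longrightarrow> G' y / y > 0"
    by (auto simp: eventually_at_right_field)
  obtain z where z: "0 < z" "z < b/2" "G (b/2) - G 0 = (b/2 - 0) * G' z"
    using MVT2[of 0 "b/2" G G'] d1 b(1) by auto
  have "G' z > 0" using b z by (auto simp: zero_less_divide_iff)
  hence "b * G' z > 0" using b(1) by simp
  hence "G (b/2) > G 0" using z by simp
  thus False using mx[of "b/2"] by simp
qed

lemma abs_poly_le_coeff_sum:
  fixes P :: "real poly" assumes r: "r \<ge> 0"
  shows "\<bar>poly P r\<bar> \<le> (\<Sum>i\<le>degree P. \<bar>coeff P i\<bar>) * (1 + r) ^ degree P"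
proof -
  have "\<bar>poly P r\<bar> = \<bar>\<Sum>i\<le>degree P. coeff P i * r ^ i\<bar>" by (simp add: poly_altdef)
  also have "\<dots> \<le> (\<Sum>i\<le>degree P. \<bar>coeff P i * r ^ i\<bar>)" by (rule sum_abs)
  also have "\<dots> \<le> (\<Sum>i\<le>degree P. \<bar>coeff P i\<bar> * (1 + r) ^ degree P)"
  proof (rule sum_mono)
    fix i assume i: "i \<in> {..degree P}"
    have "r ^ i \<le> (1 + r) ^ i" using r by (intro power_mono) auto
    also have "\<dots> \<le> (1 + r) ^ degree P" using r i by (intro power_increasing) auto
    finally show "\<bar>coeff P i * r ^ i\<bar> \<le> \<bar>coeff P i\<bar> * (1 + r) ^ degree P"
      using r by (simp add: abs_mult mult_left_mono)
  qed
  also have "\<dots> = (\<Sum>i\<le>degree P. \<bar>coeff P i\<bar>) * (1 + r) ^ degree P"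
    by (simp add: sum_distrib_right)
  finally show ?thesis .
qed

lemma eventually_poly_less_exp:
  fixes C b \<epsilon> :: real and d :: nat
  assumes "b > 0" "\<epsilon> > 0"
  shows "eventually (\<lambda>r. C * (1 + r) ^ d < \<epsilon> * exp (b * r)) at_top"
proof -
  define \<beta> where "\<beta> = b / (real d + 1)"
  have \<beta>: "\<beta> > 0" using assms by (simp add: \<beta>_def)
  have "eventually (\<lambda>r. 1 + r \<le> exp (\<beta> * r)) at_top"
    using \<beta> by real_asymp
  moreover have "eventually (\<lambda>r. C < \<epsilon> * (1 + r)) at_top"
    using assms by real_asymp
  moreover have "eventually (\<lambda>r::real. r \<ge> 0) at_top" by (rule eventually_ge_at_top)
  ultimately show ?thesis
  proof eventually_elim
    case (elim r)
    have "C * (1 + r) ^ d < \<epsilon> * (1 + r) * (1 + r) ^ d"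
      using elim by (simp add: mult_strict_right_mono)
    also have "\<dots> = \<epsilon> * (1 + r) ^ (d + 1)" by (simp add: algebra_simps)
    also have "\<dots> \<le> \<epsilon> * exp (\<beta> * r) ^ (d + 1)"
      using elim assms by (intro mult_left_mono power_mono) auto
    also have "exp (\<beta> * r) ^ (d + 1) = exp (real (d + 1) * (\<beta> * r))"
      by (rule exp_of_nat_mult[symmetric])
    also have "real (d + 1) * (\<beta> * r) = b * r" by (simp add: \<beta>_def field_simps)
    finally show ?case .
  qed
qed

section \<open>The Laplace transform of bounded continuous functions\<close>

lemma set_integrable_exp_neg:
  assumes "(p::real) > 0"
  shows "set_integrable lborel {0<..} (\<lambda>t::real. exp (- p * t))"
proof -
  have "(\<lambda>t. exp (- p * t)) absolutely_integrable_on {0::real..}"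
    by (rule nonnegative_absolutely_integrable_1[OF integrable_on_exp_minus_to_infinity[OF assms]]) auto
  hence "set_integrable lborel {0::real..} (\<lambda>t. exp (- p * t))"
    by (simp add: set_integrable_def integrable_completion)
  thus ?thesis by (rule set_integrable_subset) auto
qed

lemma set_integrable_laplace_bounded:
  fixes F :: "real \<Rightarrow> real"
  assumes cF: "continuous_on {0..} F" and bd: "\<And>t. t \<ge> 0 \<Longrightarrow> \<bar>F t\<bar> \<le> M" and p: "p > 0"
  shows "set_integrable lborel {0<..} (\<lambda>t. exp (- p * t) * F t)"
proof (rule set_integrable_bound)
  show "set_integrable lborel {0<..} (\<lambda>t. exp (- p * t) * M)"
    using set_integrable_exp_neg[OF p] by simp
  have "continuous_on {0<..} (\<lambda>t. exp (- p * t) * F t)"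
    by (intro continuous_intros continuous_on_subset[OF cF]) auto
  hence "set_borel_measurable borel {0<..} (\<lambda>t. exp (- p * t) * F t)"
    by (intro set_measurable_continuous_on) auto
  thus "set_borel_measurable lborel {0<..} (\<lambda>t. exp (- p * t) * F t)"
    by (simp add: set_borel_measurable_def)
  have "M \<ge> 0" using bd[of 0] by simp
  thus "AE t in lborel. t \<in> {0<..} \<longrightarrow> norm (exp (- p * t) * F t) \<le> norm (exp (- p * t) * M)"
    using bd by (auto simp: abs_mult intro!: mult_left_mono)
qed

lemma abs_laplace_le:
  fixes F :: "real \<Rightarrow> real"
  assumes cF: "continuous_on {0..} F" and bd: "\<And>t. t \<ge> 0 \<Longrightarrow> \<bar>F t\<bar> \<le> M" and p: "p > 0"
  shows "\<bar>laplace F p\<bar> \<le> M * (LINT t:{0<..}|lborel. exp (- p * t))"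
proof -
  have "\<bar>laplace F p\<bar> \<le> (LINT t:{0<..}|lborel. norm (exp (- p * t) * F t))"
    unfolding laplace_def
    using set_integral_norm_bound[OF set_integrable_laplace_bounded[OF cF bd p]] by simp
  also have "\<dots> \<le> (LINT t:{0<..}|lborel. exp (- p * t) * M)"
    using bd set_integrable_laplace_bounded[OF cF bd p] set_integrable_exp_neg[OF p]
    by (intro set_integral_mono set_integrable_norm) (auto simp: abs_mult intro!: mult_left_mono)
  finally show ?thesis by (simp add: mult.commute)
qed

lemma laplace_diff:
  assumes "set_integrable lborel {0<..} (\<lambda>t. exp (- p * t) * F t)"
    and "set_integrable lborel {0<..} (\<lambda>t. exp (- p * t) * H t)"
  shows "laplace (\<lambda>t. F t - H t) p = laplace F p - laplace H p"
  unfolding laplace_def using set_integral_diff(2)[OF assms]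
  by (simp add: right_diff_distrib)

lemma laplace_mult_poly_exp:
  fixes F :: "real \<Rightarrow> real"
  assumes cF: "continuous_on {0..} F" and bd: "\<And>t. t \<ge> 0 \<Longrightarrow> \<bar>F t\<bar> \<le> M" and p: "p > 0"
  shows "laplace (\<lambda>t. F t * (\<Sum>i\<le>n. a i * exp (- t) ^ i)) p = (\<Sum>i\<le>n. a i * laplace F (p + real i))"
proof -
  have int: "integrable lborel (\<lambda>t. indicator {0<..} t *\<^sub>R (exp (- (p + real i) * t) * F t))" for i
    using set_integrable_laplace_bounded[OF cF bd, of "p + real i"] p by (simp add: set_integrable_def)
  have exp_shift: "exp (- p * t) * exp (- t) ^ i = exp (- (p + real i) * t)" for i t
    by (simp add: exp_of_nat_mult[symmetric] exp_add[symmetric] algebra_simps)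
  have "indicator {0<..} t *\<^sub>R (exp (- p * t) * (F t * (\<Sum>i\<le>n. a i * exp (- t) ^ i))) =
      (\<Sum>i\<le>n. a i * (indicator {0<..} t *\<^sub>R (exp (- p * t) * exp (- t) ^ i * F t)))" for t
    by (simp add: sum_distrib_left sum_distrib_right algebra_simps)
  also have "\<dots> t = (\<Sum>i\<le>n. a i * (indicator {0<..} t *\<^sub>R (exp (- (p + real i) * t) * F t)))" for t
    by (simp only: exp_shift)
  finally show ?thesis
    unfolding laplace_def set_lebesgue_integral_def using int by (simp add: integral_sum)
qed

lemma laplace_pos_kernel:
  assumes K: "assumption_kernel k" and p: "p > 0"
  shows "laplace k p > 0"
proof -
  define g where "g = (\<lambda>t::real. indicator {0<..} t *\<^sub>R (exp (- p * t) * k t))"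
  have int: "integrable lborel g"
    using K p by (simp add: assumption_kernel_def set_integrable_def g_def)
  have nn: "g t \<ge> 0" for t
    using K by (auto simp: g_def assumption_kernel_def indicator_def)
  have lg: "laplace k p = integral\<^sup>L lborel g"
    by (simp add: laplace_def set_lebesgue_integral_def g_def)
  have "laplace k p \<noteq> 0"
  proof
    assume "laplace k p = 0"
    hence ae: "AE t in lborel. g t = 0"
      using integral_nonneg_eq_0_iff_AE[OF int] nn lg by auto
    have seteq: "{t \<in> space lborel. \<not> g t = 0} = {t\<in>{0<..}. k t \<noteq> 0}"
      by (auto simp: g_def indicator_def)
    have "g \<in> borel_measurable lborel" using int by auto
    hence "{t \<in> space lborel. \<not> g t = 0} \<in> sets lborel" by measurable
    hence "emeasure lborel {t\<in>{0<..}. k t \<noteq> 0} = 0"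
      using AE_iff_measurable[OF _ seteq] ae seteq by auto
    thus False using K by (simp add: assumption_kernel_def)
  qed
  moreover have "laplace k p \<ge> 0" unfolding lg using nn by (simp add: Bochner_Integration.integral_nonneg)
  ultimately show ?thesis by simp
qed

section \<open>Uniqueness of the Laplace transform\<close>

lemma continuous_on_exp_substitution:
  fixes F :: "real \<Rightarrow> real"
  assumes cF: "continuous_on {0..} F" and bd: "\<And>t. t \<ge> 0 \<Longrightarrow> \<bar>F t\<bar> \<le> M"
  obtains G where "continuous_on {0..1} G" "\<And>t. t \<ge> 0 \<Longrightarrow> G (exp (- t)) = exp (- t) * F t"
proof
  have M: "M \<ge> 0" using bd[of 0] by simp
  define Fe where "Fe = (\<lambda>t. F (max t 0))"
  have cFe: "continuous_on UNIV Fe" unfolding Fe_def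
    by (rule continuous_on_compose2[OF cF]) (auto intro!: continuous_intros)
  define G where "G = (\<lambda>y::real. if y \<le> 0 then 0 else y * Fe (- ln y))"
  show "G (exp (- t)) = exp (- t) * F t" if "t \<ge> 0" for t
    using that by (simp add: G_def Fe_def)
  have Gb: "\<bar>G y\<bar> \<le> M * \<bar>y\<bar>" for y
    using bd[of "max (- ln y) 0"] M
    by (auto simp: G_def Fe_def abs_mult mult.commute mult_nonneg_nonpos intro: mult_left_mono)
  show "continuous_on {0..1} G"
  proof (subst continuous_on_eq_continuous_within, intro ballI)
    fix y :: real assume y: "y \<in> {0..1}"
    show "continuous (at y within {0..1}) G"
    proof (cases "y = 0")
      case True
      have "(G \<longlongrightarrow> 0) (at 0 within {0..1})"
      proof (rule Lim_null_comparison)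
        show "\<forall>\<^sub>F z in at 0 within {0..1}. norm (G z) \<le> M * \<bar>z\<bar>" using Gb by simp
        show "((\<lambda>z. M * \<bar>z\<bar>) \<longlongrightarrow> 0) (at 0 within {0..1})"
          by (rule tendsto_eq_intros | simp)+
      qed
      thus ?thesis using True by (simp add: continuous_within G_def)
    next
      case False
      hence yp: "y > 0" using y by simp
      have "continuous_on {0<..} (\<lambda>y. y * Fe (- ln y))"
        by (intro continuous_intros continuous_on_compose2[OF cFe]) auto
      hence "isCont (\<lambda>y. y * Fe (- ln y)) y" using yp by (simp add: continuous_on_eq_continuous_at)
      moreover have "eventually (\<lambda>z. z \<in> {0<..}) (nhds y)"
        using yp by (intro eventually_nhds_in_open) auto
      hence "eventually (\<lambda>z. G z = z * Fe (- ln z)) (nhds y)"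
        by eventually_elim (auto simp: G_def)
      ultimately have "isCont G y" using isCont_cong by force
      thus ?thesis by (rule continuous_at_imp_continuous_within)
    qed
  qed
qed

lemma abs_mult_exp_neg_mult_le:
  fixes x :: real
  assumes "t \<ge> 0" "\<bar>x\<bar> \<le> M"
  shows "\<bar>x * (exp (- t) * x)\<bar> \<le> M * M"
proof -
  have "exp (- t) * \<bar>x\<bar> \<le> 1 * M" using assms by (intro mult_mono) auto
  thus ?thesis using assms by (auto simp: abs_mult intro!: mult_mono)
qed

text \<open>Pairing \<open>F\<close> with a polynomial in \<open>e\<^sup>-\<^sup>t\<close> gives a combination of values of
  \<open>laplace F\<close>, hence \<open>0\<close>; approximating \<open>y F (- ln y)\<close> uniformly on \<open>[0,1]\<close> by such
  polynomials shows the integral is arbitrarily small.\<close>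
lemma laplace_self_product_eq_0:
  fixes F :: "real \<Rightarrow> real"
  assumes cF: "continuous_on {0..} F" and bd: "\<And>t. t \<ge> 0 \<Longrightarrow> \<bar>F t\<bar> \<le> M"
    and lz: "\<And>p. p > 0 \<Longrightarrow> laplace F p = 0"
  shows "laplace (\<lambda>t. F t * (exp (- t) * F t)) 1 = 0"
proof -
  have M: "M \<ge> 0" using bd[of 0] by simp
  obtain G where cG: "continuous_on {0..1} G" and Gexp: "\<And>t. t \<ge> 0 \<Longrightarrow> G (exp (- t)) = exp (- t) * F t"
    using continuous_on_exp_substitution[OF cF bd] by blast
  define A where "A = (LINT t:{0<..}|lborel. exp (- 1 * (t::real)))"
  let ?J = "laplace (\<lambda>t. F t * (exp (- t) * F t)) 1"
  have bH: "\<bar>F t * (exp (- t) * F t)\<bar> \<le> M * M" if "t \<ge> 0" for t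
    using abs_mult_exp_neg_mult_le[OF that bd[OF that]] .
  have J_small: "\<bar>?J\<bar> \<le> \<delta> * (M * A)" if dp: "\<delta> > 0" for \<delta>
  proof -
    obtain q where pq: "polynomial_function q" and q: "\<And>y. y \<in> {0..1} \<Longrightarrow> norm (G y - q y) < \<delta>"
      using Stone_Weierstrass_polynomial_function[OF compact_Icc cG dp] by blast
    obtain a n where qa: "q = (\<lambda>y. \<Sum>i\<le>n. a i * y ^ i)"
      using pq by (auto simp: real_polynomial_function_eq[symmetric] real_polynomial_function_iff_sum)
    define Hd where "Hd = (\<lambda>t. F t * (exp (- t) * F t - q (exp (- t))))"
    have cq: "continuous_on UNIV q" unfolding qa by (intro continuous_intros)
    have cHd: "continuous_on {0..} Hd" unfolding Hd_def
      by (intro continuous_intros cF continuous_on_compose2[OF cq]) auto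
    have bHd: "\<bar>Hd t\<bar> \<le> M * \<delta>" if t: "t \<ge> 0" for t
      unfolding Hd_def abs_mult using bd[OF t] q[of "exp (- t)"] Gexp[OF t] t
      by (intro mult_mono) auto
    have cH: "continuous_on {0..} (\<lambda>t. F t * (exp (- t) * F t))"
      by (intro continuous_intros cF)
    have "laplace (\<lambda>t. F t * (exp (- t) * F t) - Hd t) 1 = ?J - laplace Hd 1"
      by (intro laplace_diff set_integrable_laplace_bounded[OF cH bH]
          set_integrable_laplace_bounded[OF cHd bHd]) simp_all
    moreover have "laplace (\<lambda>t. F t * (exp (- t) * F t) - Hd t) 1 = 0"
      using laplace_mult_poly_exp[OF cF bd zero_less_one, where n=n and a=a] lz
      by (simp add: Hd_def qa algebra_simps)
    ultimately have "?J = laplace Hd 1" by simp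
    also have "\<bar>laplace Hd 1\<bar> \<le> M * \<delta> * A"
      using abs_laplace_le[OF cHd bHd, of 1] unfolding A_def by simp
    finally show ?thesis by (simp add: mult_ac)
  qed
  have "M * A \<ge> 0" unfolding A_def set_lebesgue_integral_def using M
    by (intro mult_nonneg_nonneg Bochner_Integration.integral_nonneg) auto
  have "\<bar>?J\<bar> \<le> 0 + e" if "e > 0" for e
  proof -
    have "\<bar>?J\<bar> \<le> e / (M * A + 1) * (M * A)"
      using J_small[of "e / (M * A + 1)"] that \<open>M * A \<ge> 0\<close> by simp
    also have "\<dots> \<le> e" using that \<open>M * A \<ge> 0\<close> by (simp add: field_simps)
    finally show ?thesis by simp
  qed
  thus ?thesis using field_le_epsilon[of "\<bar>?J\<bar>" 0] by simp
qed

lemma nonneg_continuous_set_integral_eq_0: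
  fixes h :: "real \<Rightarrow> real"
  assumes ch: "continuous_on {0..} h" and nn: "\<And>t. t \<ge> 0 \<Longrightarrow> h t \<ge> 0"
    and si: "set_integrable lborel {0<..} h" and i0: "(LINT t:{0<..}|lborel. h t) = 0"
    and t0: "t0 > 0"
  shows "h t0 = 0"
proof -
  have ch': "continuous_on {t0/2..t0+1} h" by (rule continuous_on_subset[OF ch]) (use t0 in auto)
  have ih: "h integrable_on {t0/2..t0+1}" by (rule integrable_continuous_real[OF ch'])
  have "integral {t0/2..t0+1} h \<le> integral {0<..} h"
  proof (rule integral_subset_le[OF _ ih set_borel_integral_eq_integral(1)[OF si]])
    show "{t0/2..t0+1} \<subseteq> {0<..}" using t0 by auto
    show "\<forall>t\<in>{0<..}. 0 \<le> h t" using nn by simp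
  qed
  also have "integral {0<..} h = 0"
    using set_borel_integral_eq_integral(2)[OF si] i0 by simp
  finally have "integral {t0/2..t0+1} h \<le> 0" .
  moreover have "integral {t0/2..t0+1} h \<ge> 0"
    by (rule integral_nonneg[OF ih]) (use t0 nn in auto)
  ultimately have "(h has_integral 0) (cbox (t0/2) (t0+1))"
    using ih by (metis antisym cbox_interval has_integral_integral)
  thus ?thesis
    using t0 nn by (intro has_integral_0_cbox_imp_0[of "t0/2" "t0+1" h]) (auto simp: ch')
qed

lemma laplace_eq_0_imp_eq_0:
  fixes F :: "real \<Rightarrow> real"
  assumes cF: "continuous_on {0..} F" and bd: "\<And>t. t \<ge> 0 \<Longrightarrow> \<bar>F t\<bar> \<le> M"
    and lz: "\<And>p. p > 0 \<Longrightarrow> laplace F p = 0" and t0: "t0 > 0"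
  shows "F t0 = 0"
proof -
  define h where "h = (\<lambda>t. exp (- 1 * t) * (F t * (exp (- t) * F t)))"
  have bH: "\<bar>F t * (exp (- t) * F t)\<bar> \<le> M * M" if "t \<ge> 0" for t
    using abs_mult_exp_neg_mult_le[OF that bd[OF that]] .
  have "h t0 = 0"
  proof (rule nonneg_continuous_set_integral_eq_0[OF _ _ _ _ t0])
    show "continuous_on {0..} h" unfolding h_def by (intro continuous_intros cF)
    show "h t \<ge> 0" for t
    proof -
      have "h t = (exp (- t) * exp (- t)) * (F t * F t)" by (simp add: h_def mult_ac)
      thus ?thesis by simp
    qed
    show "set_integrable lborel {0<..} h" unfolding h_def
      by (intro set_integrable_laplace_bounded[OF _ bH zero_less_one] continuous_intros cF)
    show "(LINT t:{0<..}|lborel. h t) = 0"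
      using laplace_self_product_eq_0[OF cF bd lz] by (simp add: h_def laplace_def)
  qed
  thus ?thesis by (simp add: h_def)
qed

section \<open>A Liouville theorem for \<open>\<Delta>u = c u\<close>\<close>

definition cosh_barrier :: "real \<Rightarrow> real^'n \<Rightarrow> real" where
  "cosh_barrier a x = (\<Sum>j\<in>UNIV. cosh (a * x $ j))"

lemma cosh_barrier_pos: "cosh_barrier a x > 0"
  unfolding cosh_barrier_def by (intro sum_pos) (auto simp: cosh_real_pos)

lemma cosh_barrier_along_axis:
  "cosh_barrier a (x + s *\<^sub>R axis i 1) = cosh (a * (x $ i + s)) + (\<Sum>j\<in>UNIV-{i}. cosh (a * x $ j))"
proof -
  have "cosh_barrier a (x + s *\<^sub>R axis i 1) =
     cosh (a * (x + s *\<^sub>R axis i 1) $ i) + (\<Sum>j\<in>UNIV-{i}. cosh (a * (x + s *\<^sub>R axis i 1) $ j))"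
    unfolding cosh_barrier_def by (subst sum.remove[of UNIV i]) auto
  also have "(\<Sum>j\<in>UNIV-{i}. cosh (a * (x + s *\<^sub>R axis i 1) $ j)) = (\<Sum>j\<in>UNIV-{i}. cosh (a * x $ j))"
    by (rule sum.cong) (auto simp: axis_def)
  finally show ?thesis by (simp add: axis_def)
qed

lemma exp_le_cosh_barrier:
  fixes x :: "real^'n"
  assumes "a \<ge> 0"
  shows "exp (a / CARD('n) * norm x) \<le> 2 * cosh_barrier a x"
proof -
  have "Max (range (\<lambda>i. \<bar>x $ i\<bar>)) \<in> range (\<lambda>i. \<bar>x $ i\<bar>)" by (intro Max_in) auto
  then obtain j where jmax: "Max (range (\<lambda>i. \<bar>x $ i\<bar>)) = \<bar>x $ j\<bar>" by blast
  have j: "\<bar>x $ i\<bar> \<le> \<bar>x $ j\<bar>" for i unfolding jmax[symmetric] by (intro Max_ge) auto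
  have "norm x \<le> (\<Sum>i\<in>UNIV. \<bar>x $ i\<bar>)" by (rule norm_le_l1_cart)
  also have "\<dots> \<le> CARD('n) * \<bar>x $ j\<bar>"
    using sum_bounded_above[of UNIV "\<lambda>i. \<bar>x $ i\<bar>" "\<bar>x $ j\<bar>"] j by simp
  finally have "norm x / CARD('n) \<le> \<bar>x $ j\<bar>" by (simp add: divide_le_eq mult.commute)
  from mult_left_mono[OF this assms] have "a / CARD('n) * norm x \<le> a * \<bar>x $ j\<bar>" by simp
  hence "exp (a / CARD('n) * norm x) \<le> exp (a * \<bar>x $ j\<bar>)" by simp
  also have "\<dots> \<le> 2 * cosh (a * x $ j)"
    using assms by (cases "x $ j \<ge> 0") (auto simp: cosh_def abs_real_def)
  also have "cosh (a * x $ j) \<le> cosh_barrier a x"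
    unfolding cosh_barrier_def by (rule member_le_sum) (auto simp: cosh_real_pos less_imp_le)
  finally show ?thesis by simp
qed

lemma has_real_derivative_along_axis:
  assumes "C2 u"
  shows "((\<lambda>s. u (x + s *\<^sub>R axis i 1)) has_real_derivative partial i u (x + s *\<^sub>R axis i 1)) (at s)"
proof -
  have "has_partial i u (x + s *\<^sub>R axis i 1)" using assms by (simp add: C2_def)
  hence "((\<lambda>r. u (x + s *\<^sub>R axis i 1 + r *\<^sub>R axis i 1)) has_real_derivative partial i u (x + s *\<^sub>R axis i 1)) (at 0)"
    by (simp add: has_partial_def partial_def DERIV_deriv_iff_real_differentiable)
  hence "((\<lambda>r. u (x + (r + s) *\<^sub>R axis i 1)) has_real_derivative partial i u (x + s *\<^sub>R axis i 1)) (at 0)"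
    by (simp add: scaleR_add_left algebra_simps)
  thus ?thesis using DERIV_shift[of "\<lambda>s. u (x + s *\<^sub>R axis i 1)" _ 0 s] by simp
qed

lemma has_real_derivative_partial_along_axis:
  assumes "C2 u"
  shows "((\<lambda>s. partial i u (x + s *\<^sub>R axis i 1)) has_real_derivative partial i (partial i u) x) (at 0)"
proof -
  have "has_partial i (partial i u) x" using assms by (simp add: C2_def)
  thus ?thesis
    by (simp add: has_partial_def partial_def[of i "partial i u"] DERIV_deriv_iff_real_differentiable)
qed

lemma second_partial_le_at_max:
  assumes C: "C2 u"
    and mx: "\<And>z. \<sigma> * u z - \<epsilon> * cosh_barrier a z \<le> \<sigma> * u x0 - \<epsilon> * cosh_barrier a x0"
  shows "\<sigma> * partial i (partial i u) x0 \<le> \<epsilon> * (a * (a * cosh (a * x0 $ i)))"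
proof -
  define K where "K = (\<Sum>j\<in>UNIV-{i}. cosh (a * x0 $ j))"
  let ?G = "\<lambda>s. \<sigma> * u (x0 + s *\<^sub>R axis i 1) - \<epsilon> * (cosh (a * (x0 $ i + s)) + K)"
  let ?G' = "\<lambda>s. \<sigma> * partial i u (x0 + s *\<^sub>R axis i 1) - \<epsilon> * (a * sinh (a * (x0 $ i + s)))"
  have "\<sigma> * partial i (partial i u) x0 - \<epsilon> * (a * (a * cosh (a * x0 $ i))) \<le> 0"
  proof (rule second_deriv_nonpos_at_max)
    show "(?G has_real_derivative ?G' s) (at s)" for s
      by (rule derivative_eq_intros has_real_derivative_along_axis[OF C] refl | simp)+
    show "(?G' has_real_derivative (\<sigma> * partial i (partial i u) x0 - \<epsilon> * (a * (a * cosh (a * x0 $ i))))) (at 0)"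
      by (rule derivative_eq_intros has_real_derivative_partial_along_axis[OF C] refl | simp)+
    show "?G s \<le> ?G 0" for s
      using mx[of "x0 + s *\<^sub>R axis i 1"] cosh_barrier_along_axis[of a x0 0 i]
      by (simp add: cosh_barrier_along_axis K_def)
  qed
  thus ?thesis by simp
qed

text \<open>The barrier solves \<open>\<Delta>\<phi> = c \<phi>\<close> too, so at a positive maximum \<open>x\<^sub>0\<close> of
  \<open>v = \<sigma> u - \<epsilon> \<phi>\<close> we would get \<open>c v x\<^sub>0 = \<Delta>v x\<^sub>0 \<le> 0\<close>.\<close>
lemma helmholtz_max_principle:
  fixes u :: "real^'n \<Rightarrow> real"
  assumes C: "C2 u" and lap: "\<And>x. laplacian u x = c * u x" and c: "c > 0"
    and R: "\<And>x. norm x \<ge> R \<Longrightarrow> \<sigma> * u x - \<epsilon> * cosh_barrier (sqrt c) x < 0"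
  shows "\<sigma> * u y - \<epsilon> * cosh_barrier (sqrt c) y \<le> 0"
proof (rule ccontr)
  define v where "v = (\<lambda>x::real^'n. \<sigma> * u x - \<epsilon> * cosh_barrier (sqrt c) x)"
  assume "\<not> ?thesis"
  hence vy: "v y > 0" by (simp add: v_def)
  have "continuous_on UNIV u" using C by (simp add: C2_def)
  hence "continuous_on UNIV v" unfolding v_def cosh_barrier_def by (intro continuous_intros)
  hence cv: "continuous_on (cball 0 R) v" by (rule continuous_on_subset) simp
  have "\<not> R \<le> norm y" using R[of y] vy by (auto simp: v_def)
  hence yR: "y \<in> cball 0 R" by simp
  obtain x0 where x0: "\<And>z. z \<in> cball 0 R \<Longrightarrow> v z \<le> v x0"
    using continuous_attains_sup[OF compact_cball _ cv] yR by blast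
  have vx0: "v x0 > 0" using x0[OF yR] vy by simp
  have glob: "v z \<le> v x0" for z
  proof (cases "z \<in> cball 0 R")
    case True thus ?thesis by (rule x0)
  next
    case False
    hence "v z < 0" using R[of z] by (simp add: v_def)
    thus ?thesis using vx0 by simp
  qed
  have sc: "sqrt c * (sqrt c * r) = c * r" for r
    using c by (simp add: mult.assoc[symmetric])
  have "\<sigma> * laplacian u x0 = (\<Sum>i\<in>UNIV. \<sigma> * partial i (partial i u) x0)"
    by (simp add: laplacian_def sum_distrib_left)
  also have "\<dots> \<le> (\<Sum>i\<in>UNIV. \<epsilon> * (sqrt c * (sqrt c * cosh (sqrt c * x0 $ i))))"
    by (intro sum_mono second_partial_le_at_max[OF C]) (use glob in \<open>simp add: v_def\<close>)
  also have "\<dots> = \<epsilon> * c * cosh_barrier (sqrt c) x0"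
    by (simp add: sc cosh_barrier_def sum_distrib_left mult.assoc)
  finally have "c * v x0 \<le> 0" by (simp add: lap v_def algebra_simps)
  thus False using c vx0 by (simp add: mult_le_0_iff)
qed

lemma helmholtz_liouville:
  fixes u :: "real^'n \<Rightarrow> real"
  assumes C: "C2 u" and lap: "\<And>x. laplacian u x = c * u x" and c: "c > 0"
    and bd: "\<And>x. \<bar>u x\<bar> \<le> B * (1 + norm x) ^ d"
  shows "u y = 0"
proof -
  define b where "b = sqrt c / CARD('n)"
  have b: "b > 0" using c by (simp add: b_def)
  have barrier: "\<sigma> * u y \<le> \<epsilon> * cosh_barrier (sqrt c) y" if s: "\<bar>\<sigma>\<bar> = 1" and e: "\<epsilon> > 0" for \<sigma> \<epsilon>
  proof -
    obtain R where R: "\<And>r. r \<ge> R \<Longrightarrow> B * (1 + r) ^ d < (\<epsilon>/2) * exp (b * r)"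
      using eventually_poly_less_exp[OF b, of "\<epsilon>/2" B d] e by (auto simp: eventually_at_top_linorder)
    have "\<sigma> * u x - \<epsilon> * cosh_barrier (sqrt c) x < 0" if x: "norm x \<ge> R" for x
    proof -
      have "\<sigma> * u x \<le> \<bar>u x\<bar>" using s abs_ge_self[of "\<sigma> * u x"] by (simp add: abs_mult)
      also have "\<dots> \<le> B * (1 + norm x) ^ d" by (rule bd)
      also have "\<dots> < (\<epsilon>/2) * exp (b * norm x)" using R x by simp
      also have "\<dots> \<le> (\<epsilon>/2) * (2 * cosh_barrier (sqrt c) x)"
        using exp_le_cosh_barrier[of "sqrt c" x] c e by (intro mult_left_mono) (auto simp: b_def)
      finally show ?thesis by simp
    qed
    thus ?thesis using helmholtz_max_principle[OF C lap c, of R \<sigma> \<epsilon> y] by simp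
  qed
  show ?thesis
  proof (rule ccontr)
    assume ne: "u y \<noteq> 0"
    define \<epsilon> where "\<epsilon> = \<bar>u y\<bar> / (2 * cosh_barrier (sqrt c) y)"
    have e: "\<epsilon> > 0" using ne cosh_barrier_pos[of "sqrt c" y] by (simp add: \<epsilon>_def)
    have "\<bar>u y\<bar> \<le> \<epsilon> * cosh_barrier (sqrt c) y"
      using barrier[of 1 \<epsilon>] barrier[of "-1" \<epsilon>] e by auto
    also have "\<dots> = \<bar>u y\<bar> / 2" using cosh_barrier_pos[of "sqrt c" y] by (simp add: \<epsilon>_def)
    finally show False using ne by simp
  qed
qed

lemma poly_bounded_LT_solution_continuous:
  assumes "poly_bounded_LT_solution k w0 w"
  shows "continuous_on {0..} (\<lambda>t. w t x)"
  unfolding continuous_on_iff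
proof (intro ballI allI impI)
  fix t0 e :: real assume "t0 \<in> {0..}" "e > 0"
  moreover note assms[unfolded poly_bounded_LT_solution_def, THEN conjunct2, THEN conjunct1]
  ultimately obtain d where "d > 0" "\<And>t. t \<ge> 0 \<Longrightarrow> \<bar>t - t0\<bar> < d \<Longrightarrow> \<bar>w t x - w t0 x\<bar> < e"
    by force
  thus "\<exists>d>0. \<forall>t\<in>{0..}. dist t t0 < d \<longrightarrow> dist (w t x) (w t0 x) < e"
    by (auto simp: dist_real_def)
qed

lemma poly_bounded_LT_solution_laplace_eq_0:
  assumes K: "assumption_kernel k" and sol: "poly_bounded_LT_solution k (\<lambda>x. 0) w" and p: "p > 0"
  shows "laplace (\<lambda>t. w t x) p = 0"
proof -
  note sol_def = sol[unfolded poly_bounded_LT_solution_def]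
  obtain P :: "real poly" where P: "\<And>t x. t \<ge> 0 \<Longrightarrow> \<bar>w t x\<bar> \<le> poly P (norm x)"
    using sol_def[THEN conjunct1] by blast
  define U where "U = (\<lambda>x. laplace (\<lambda>t. w t x) p)"
  have "C2 U \<and> (\<forall>y. p * laplace k p * U y - laplace k p * 0 = laplacian U y)"
    using sol_def[THEN conjunct2, THEN conjunct2, THEN conjunct2] p unfolding U_def by blast
  hence CU: "C2 U" and lapU: "\<And>y. laplacian U y = p * laplace k p * U y" by simp_all
  have c: "p * laplace k p > 0" using laplace_pos_kernel[OF K p] p by simp
  define A where "A = (LINT t:{0<..}|lborel. exp (- p * (t::real)))"
  define S where "S = (\<Sum>i\<le>degree P. \<bar>coeff P i\<bar>)"
  have bU: "\<bar>U y\<bar> \<le> (A * S) * (1 + norm y) ^ degree P" for y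
  proof -
    have "A \<ge> 0" unfolding A_def set_lebesgue_integral_def
      by (intro Bochner_Integration.integral_nonneg) auto
    have "\<bar>U y\<bar> \<le> poly P (norm y) * A"
      unfolding U_def A_def
      by (rule abs_laplace_le[OF poly_bounded_LT_solution_continuous[OF sol] P p])
    also have "\<dots> \<le> (S * (1 + norm y) ^ degree P) * A"
      using abs_poly_le_coeff_sum[of "norm y" P] \<open>A \<ge> 0\<close> by (intro mult_right_mono) (auto simp: S_def)
    finally show ?thesis by (simp add: mult_ac)
  qed
  show ?thesis using helmholtz_liouville[OF CU lapU c bU] by (simp add: U_def)
qed

theorem theorem4:
  fixes k :: "real \<Rightarrow> real" and w :: "real \<Rightarrow> real^'n \<Rightarrow> real"
  assumes "assumption_kernel k"
    and "poly_bounded_LT_solution k (\<lambda>x. 0) w"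
  shows "\<forall>t\<ge>0. \<forall>x. w t x = 0"
proof (intro allI impI)
  fix t :: real and x :: "real^'n"
  assume t: "t \<ge> 0"
  note sol_def = assms(2)[unfolded poly_bounded_LT_solution_def]
  obtain P :: "real poly" where P: "\<And>t. t \<ge> 0 \<Longrightarrow> \<bar>w t x\<bar> \<le> poly P (norm x)"
    using sol_def[THEN conjunct1] by blast
  show "w t x = 0"
  proof (cases "t = 0")
    case True
    thus ?thesis using sol_def[THEN conjunct2, THEN conjunct2, THEN conjunct1] by simp
  next
    case False
    with t show ?thesis
      using laplace_eq_0_imp_eq_0[OF poly_bounded_LT_solution_continuous[OF assms(2)] P
          poly_bounded_LT_solution_laplace_eq_0[OF assms]] by simp
  qed
qed

end
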